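(* For all positive integers $n$ and non-negative integers $k$, $$\det_{0\le i,j\le n-1}\Big(\sum_{l\ge0}\mathcal P^+_{i+j}(k,l)\Big)= \begin{cases} (-1)^{n_1\binom{k+1}2}(xy)^{(k+1)^2\binom{n_1+1}2-n}, & \text{if } n=(k+1)n_1,\\ (-1)^{n_1\binom{k+1}2}(xy)^{(k+1)^2\binom{n_1+1}2}, & \text{if } n=(k+1)n_1+1,\\ 0, & \text{if } n\not\equiv 0,1 \pmod{k+1}. \end{cases}$$ Here $n_1$ denotes a non-negative integer. For $k=0$ (where the first two cases overlap) only the first case applies, i.e. the determinant equals $(xy)^{\binom n2}$.
   Context: Three-step paths consist of up-steps $(1,1)$, level steps $(1,0)$ and down-steps $(1,-1)$. Weights: $w((1,1))=1$, $w((1,0))=x+y$, $w((1,-1))=xy$, and the weight $w(P)$ of a path is the product of the weights of its steps. $\mathcal P_n(k,l)=\sum_P w(P)$ over all three-step paths from $(0,k)$ to $(n,l)$; $\mathcal P^+_n(k,l)$ is the same sum restricted to paths that never run below the $x$-axis. For fixed $n,k$ the sum $\sum_{l\ge0}\mathcal P^+_n(k,l)$ is finite. These are polynomials in the indeterminates $x,y$. *)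

theory Defs
  imports "Jordan_Normal_Form.Determinant"
begin

text \<open>Three-step paths are encoded by their list of step heights:
  1 = up-step (1,1), 0 = level step (1,0), -1 = down-step (1,-1).
  The indeterminates x, y are elements of an arbitrary commutative ring.\<close>

definition step_weight :: "'a::comm_ring_1 \<Rightarrow> 'a \<Rightarrow> int \<Rightarrow> 'a" where
  "step_weight x y s = (if s = 1 then 1 else if s = 0 then x + y else x * y)"

definition path_weight :: "'a::comm_ring_1 \<Rightarrow> 'a \<Rightarrow> int list \<Rightarrow> 'a" where
  "path_weight x y ss = prod_list (map (step_weight x y) ss)"

definition step_seqs :: "nat \<Rightarrow> nat \<Rightarrow> nat \<Rightarrow> int list set" where
  "step_seqs n k l = {ss. length ss = n \<and> set ss \<subseteq> {-1, 0, 1} \<and>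
      int k + sum_list ss = int l}"

definition pos_step_seqs :: "nat \<Rightarrow> nat \<Rightarrow> nat \<Rightarrow> int list set" where
  "pos_step_seqs n k l = {ss \<in> step_seqs n k l.
      \<forall>j \<le> n. int k + sum_list (take j ss) \<ge> 0}"

definition Ppaths :: "'a::comm_ring_1 \<Rightarrow> 'a \<Rightarrow> nat \<Rightarrow> nat \<Rightarrow> nat \<Rightarrow> 'a" where
  "Ppaths x y n k l = (\<Sum>ss\<in>step_seqs n k l. path_weight x y ss)"

definition Ppos :: "'a::comm_ring_1 \<Rightarrow> 'a \<Rightarrow> nat \<Rightarrow> nat \<Rightarrow> nat \<Rightarrow> 'a" where
  "Ppos x y n k l = (\<Sum>ss\<in>pos_step_seqs n k l. path_weight x y ss)"

text \<open>The finite sum over l \<ge> 0 of Ppos: endpoints l > k + n are unreachable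
  (Ppos is 0 there), so the sum is taken over l \<in> {0..k+n}.\<close>
definition Ppos_total :: "'a::comm_ring_1 \<Rightarrow> 'a \<Rightarrow> nat \<Rightarrow> nat \<Rightarrow> 'a" where
  "Ppos_total x y n k = (\<Sum>l = 0..k + n. Ppos x y n k l)"

end

theory Submission
  imports Defs
begin

text \<open>With the transfer operator \<open>C\<close> of a single step, the Hankel entries are the moments
  \<open>(C\<^sup>i\<^sup>+\<^sup>j 1)(k)\<close>. Multiplying the Hankel matrix by unitriangular matrices of monic polynomials
  \<open>P\<^sub>i\<close> (rows) and \<open>Q\<^sub>j\<close> (columns) replaces the entries by \<open>(P\<^sub>i(C) Q\<^sub>j(C) 1)(k)\<close>. Taking
  \<open>Q\<^sub>j\<^sub>+\<^sub>1 = (X - (1 + x)(1 + y)) R\<^sub>j\<close> with \<open>R\<^sub>j\<close> the orthogonal polynomials of \<open>C\<close> turns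
  \<open>Q\<^sub>j\<^sub>+\<^sub>1(C) 1\<close> into the point mass \<open>-(xy)\<^sup>j\<^sup>+\<^sup>1 \<delta>\<^sub>j\<close>; choosing for \<open>P\<^sub>i\<close> suitably perturbed
  orthogonal polynomials makes \<open>(P\<^sub>i(C) \<delta>\<^sub>h)(k)\<close> equal to \<open>\<delta>\<^bsub>h,k+i\<^esub>\<close> plus a single entry below
  height \<open>k\<close>, periodic in \<open>i\<close>. After extracting \<open>(xy)\<^bsup>n choose 2\<^esup>\<close>, the remaining matrix is a
  shifted identity plus \<open>k\<close> columns; its determinant reduces to a \<open>k \<times> k\<close> block, which is
  antidiagonal or diagonal according to the parity of \<open>n\<^sub>1\<close>, and vanishes when
  \<open>n mod (k + 1) \<ge> 2\<close> because the block then has a zero column.\<close>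

section \<open>First-step decomposition of positive paths\<close>

lemma all_le_Suc_conv: "(\<forall>j\<le>Suc m. P j) \<longleftrightarrow> P 0 \<and> (\<forall>j\<le>m. P (Suc j))"
  by (metis Suc_le_mono le0 not0_implies_Suc)

lemma Cons_in_pos_step_seqs_iff:
  "s # ss \<in> pos_step_seqs (Suc m) k l \<longleftrightarrow>
     s \<in> {-1, 0, 1} \<and> 0 \<le> int k + s \<and> ss \<in> pos_step_seqs m (nat (int k + s)) l"
proof -
  have "(\<forall>j\<le>Suc m. 0 \<le> int k + sum_list (take j (s # ss))) \<longleftrightarrow>
        0 \<le> int k + s \<and> (\<forall>j\<le>m. 0 \<le> int k + s + sum_list (take j ss))"
    unfolding all_le_Suc_conv by (auto simp: add.assoc dest: spec[where x = 0])
  then show ?thesis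
    unfolding pos_step_seqs_def step_seqs_def by auto
qed

lemma pos_step_seqs_Suc:
  "pos_step_seqs (Suc m) k l =
     Cons 1 ` pos_step_seqs m (Suc k) l \<union> Cons 0 ` pos_step_seqs m k l \<union>
     (if k > 0 then Cons (-1) ` pos_step_seqs m (k - 1) l else {})"
proof (rule Set.set_eqI)
  fix ss :: "int list"
  show "ss \<in> pos_step_seqs (Suc m) k l \<longleftrightarrow> ss \<in> Cons 1 ` pos_step_seqs m (Suc k) l \<union>
     Cons 0 ` pos_step_seqs m k l \<union> (if k > 0 then Cons (-1) ` pos_step_seqs m (k - 1) l else {})"
  proof (cases ss)
    case Nil
    then show ?thesis by (auto simp: pos_step_seqs_def step_seqs_def)
  next
    case (Cons s ss')
    have "nat (int k + 1) = Suc k" "nat (int k - 1) = k - 1" by auto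
    then show ?thesis
      unfolding Cons Cons_in_pos_step_seqs_iff by (auto simp: image_iff)
  qed
qed

lemma finite_step_seqs: "finite (step_seqs n k l)"
proof -
  have "step_seqs n k l \<subseteq> {xs. set xs \<subseteq> {-1, 0, 1} \<and> length xs = n}"
    unfolding step_seqs_def by auto
  moreover have "finite {xs. set xs \<subseteq> ({-1, 0, 1} :: int set) \<and> length xs = n}"
    by (rule finite_lists_length_eq) auto
  ultimately show ?thesis by (rule finite_subset)
qed

lemma finite_pos_step_seqs: "finite (pos_step_seqs n k l)"
  using finite_step_seqs unfolding pos_step_seqs_def by auto

lemma Ppos_0: "Ppos x y 0 k l = (if k = l then 1 else 0)"
proof -
  have "pos_step_seqs 0 k l = (if k = l then {[]} else {})"
    unfolding pos_step_seqs_def step_seqs_def by auto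
  then show ?thesis unfolding Ppos_def path_weight_def by auto
qed

lemma Ppos_Suc:
  "Ppos x y (Suc m) k l = Ppos x y m (Suc k) l + (x + y) * Ppos x y m k l
     + (if k > 0 then x * y * Ppos x y m (k - 1) l else 0)"
proof -
  let ?A = "Cons 1 ` pos_step_seqs m (Suc k) l" and ?B = "Cons 0 ` pos_step_seqs m k l"
    and ?C = "if k > 0 then Cons (-1) ` pos_step_seqs m (k - 1) l else {}"
  have fin: "finite ?A" "finite ?B" "finite ?C" using finite_pos_step_seqs by auto
  have disj: "?A \<inter> ?B = {}" "(?A \<union> ?B) \<inter> ?C = {}" by auto
  have weight_Cons: "path_weight x y (s # ss) = step_weight x y s * path_weight x y ss" for s ss
    unfolding path_weight_def by simp
  have "Ppos x y (Suc m) k l = sum (path_weight x y) (?A \<union> ?B \<union> ?C)"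
    unfolding Ppos_def pos_step_seqs_Suc ..
  also have "\<dots> = sum (path_weight x y) ?A + sum (path_weight x y) ?B + sum (path_weight x y) ?C"
    using fin disj by (simp add: sum.union_disjoint)
  also have "sum (path_weight x y) ?A = Ppos x y m (Suc k) l"
    by (subst sum.reindex) (auto simp: inj_on_def weight_Cons step_weight_def Ppos_def)
  also have "sum (path_weight x y) ?B = (x + y) * Ppos x y m k l"
    by (subst sum.reindex)
      (auto simp: inj_on_def weight_Cons step_weight_def Ppos_def sum_distrib_left)
  also have "sum (path_weight x y) ?C = (if k > 0 then x * y * Ppos x y m (k - 1) l else 0)"
    by (cases "k > 0", simp_all, subst sum.reindex)
      (auto simp: inj_on_def weight_Cons step_weight_def Ppos_def sum_distrib_left)
  finally show ?thesis .
qed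


section \<open>The transfer operator\<close>

definition path_op :: "'a::comm_ring_1 \<Rightarrow> 'a \<Rightarrow> (nat \<Rightarrow> 'a) \<Rightarrow> nat \<Rightarrow> 'a" where
  "path_op x y v = (\<lambda>h. v (Suc h) + (x + y) * v h + (if h > 0 then x * y * v (h - 1) else 0))"

definition one_seq :: "nat \<Rightarrow> 'a::comm_ring_1" where
  "one_seq = (\<lambda>_. 1)"

definition unit_seq :: "nat \<Rightarrow> nat \<Rightarrow> 'a::comm_ring_1" where
  "unit_seq h = (\<lambda>g. if g = h then 1 else 0)"

lemma sum_Ppos_eq_path_op:
  "k + m \<le> N \<Longrightarrow> (\<Sum>l = 0..N. Ppos x y m k l) = (path_op x y ^^ m) one_seq k"
proof (induction m arbitrary: k)
  case 0
  then show ?case by (simp add: Ppos_0 one_seq_def)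
next
  case (Suc m)
  have "(\<Sum>l = 0..N. Ppos x y (Suc m) k l) =
     (\<Sum>l = 0..N. Ppos x y m (Suc k) l) + (x + y) * (\<Sum>l = 0..N. Ppos x y m k l) +
     (if k > 0 then x * y * (\<Sum>l = 0..N. Ppos x y m (k - 1) l) else 0)"
    by (simp add: Ppos_Suc sum.distrib sum_distrib_left)
  also have "\<dots> = (path_op x y ^^ Suc m) one_seq k"
    using Suc by (simp add: path_op_def[of x y "(path_op x y ^^ m) one_seq"])
  finally show ?case .
qed

lemma Ppos_total_eq_path_op: "Ppos_total x y m k = (path_op x y ^^ m) one_seq k"
  unfolding Ppos_total_def by (rule sum_Ppos_eq_path_op) simp

lemma path_op_add: "path_op x y (\<lambda>h. f h + g h) = (\<lambda>h. path_op x y f h + path_op x y g h)"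
  by (auto simp: path_op_def algebra_simps)

lemma path_op_diff: "path_op x y (\<lambda>h. f h - g h) = (\<lambda>h. path_op x y f h - path_op x y g h)"
  by (auto simp: path_op_def algebra_simps)

lemma path_op_smult: "path_op x y (\<lambda>h. c * f h) = (\<lambda>h. c * path_op x y f h)"
  by (auto simp: path_op_def algebra_simps)

lemma path_op_sum: "path_op x y (\<lambda>h. \<Sum>i\<in>A. F i h) = (\<lambda>h. \<Sum>i\<in>A. path_op x y (F i) h)"
  by (auto simp: path_op_def algebra_simps sum.distrib sum_distrib_left)

lemma path_op_pow_add:
  "(path_op x y ^^ n) (\<lambda>h. f h + g h) = (\<lambda>h. (path_op x y ^^ n) f h + (path_op x y ^^ n) g h)"
  by (induction n) (auto simp: path_op_add)

lemma path_op_pow_diff: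
  "(path_op x y ^^ n) (\<lambda>h. f h - g h) = (\<lambda>h. (path_op x y ^^ n) f h - (path_op x y ^^ n) g h)"
  by (induction n) (auto simp: path_op_diff)

lemma path_op_pow_smult: "(path_op x y ^^ n) (\<lambda>h. c * f h) = (\<lambda>h. c * (path_op x y ^^ n) f h)"
  by (induction n) (auto simp: path_op_smult)

lemma path_op_pow_sum:
  "(path_op x y ^^ n) (\<lambda>h. \<Sum>i\<in>A. F i h) = (\<lambda>h. \<Sum>i\<in>A. (path_op x y ^^ n) (F i) h)"
  by (induction n) (auto simp: path_op_sum)

lemma path_op_pow_zero: "(path_op x y ^^ n) (\<lambda>_. 0) = (\<lambda>_. 0)"
  by (induction n) (auto simp: path_op_def)

lemma path_op_pow_cong:
  "(\<And>g'. g' \<le> g + n \<Longrightarrow> v g' = w g') \<Longrightarrow> (path_op x y ^^ n) v g = (path_op x y ^^ n) w g"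
proof (induction n arbitrary: g)
  case 0
  then show ?case by simp
next
  case (Suc n)
  have "(path_op x y ^^ n) v g' = (path_op x y ^^ n) w g'" if "g' \<le> Suc g" for g'
    using Suc.IH[of g'] Suc.prems that by simp
  then show ?case
    by (simp add: path_op_def[of x y "(path_op x y ^^ n) v"] path_op_def[of x y "(path_op x y ^^ n) w"])
qed

lemma path_op_unit_seq:
  "path_op x y (unit_seq h) = (\<lambda>g. (if h > 0 then unit_seq (h - 1) g else 0)
     + (x + y) * unit_seq h g + x * y * unit_seq (h + 1) g)"
proof
  fix g
  show "path_op x y (unit_seq h) g = (if h > 0 then unit_seq (h - 1) g else 0)
     + (x + y) * unit_seq h g + x * y * unit_seq (h + 1) g"
    by (cases h) (auto simp: path_op_def unit_seq_def)
qed


section \<open>Polynomials in the transfer operator\<close>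

definition op_poly :: "'a::comm_ring_1 \<Rightarrow> 'a \<Rightarrow> 'a poly \<Rightarrow> (nat \<Rightarrow> 'a) \<Rightarrow> nat \<Rightarrow> 'a" where
  "op_poly x y p v = (\<lambda>h. \<Sum>i<Suc (degree p). coeff p i * (path_op x y ^^ i) v h)"

lemma op_poly_altdef:
  assumes "degree p < N"
  shows "op_poly x y p v = (\<lambda>h. \<Sum>i<N. coeff p i * (path_op x y ^^ i) v h)"
proof
  fix h
  show "op_poly x y p v h = (\<Sum>i<N. coeff p i * (path_op x y ^^ i) v h)"
    unfolding op_poly_def
    by (rule sum.mono_neutral_left) (use assms in \<open>auto simp: coeff_eq_0\<close>)
qed

lemma op_poly_add: "op_poly x y (p + q) v = (\<lambda>h. op_poly x y p v h + op_poly x y q v h)"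
proof -
  define N where "N = Suc (degree p + degree q)"
  have "degree (p + q) < N" "degree p < N" "degree q < N"
    unfolding N_def using degree_add_le_max[of p q] by auto
  then show ?thesis by (simp add: op_poly_altdef[of _ N] algebra_simps sum.distrib)
qed

lemma op_poly_diff: "op_poly x y (p - q) v = (\<lambda>h. op_poly x y p v h - op_poly x y q v h)"
proof -
  define N where "N = Suc (degree p + degree q)"
  have "degree (p - q) < N" "degree p < N" "degree q < N"
    unfolding N_def using degree_diff_le_max[of p q] by auto
  then show ?thesis by (simp add: op_poly_altdef[of _ N] algebra_simps sum_subtractf)
qed

lemma op_poly_smult: "op_poly x y (smult c p) v = (\<lambda>h. c * op_poly x y p v h)"
proof -
  define N where "N = Suc (degree p)"
  have "degree (smult c p) < N" "degree p < N"
    unfolding N_def using degree_smult_le[of c p] by auto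
  then show ?thesis by (simp add: op_poly_altdef[of _ N] algebra_simps sum_distrib_left)
qed

lemma op_poly_const: "op_poly x y [:c:] v = (\<lambda>h. c * v h)"
  unfolding op_poly_def by simp

lemma op_poly_1: "op_poly x y 1 v = v"
  unfolding op_poly_def by simp

lemma op_poly_pCons_0: "op_poly x y (pCons 0 p) v = path_op x y (op_poly x y p v)"
proof -
  define N where "N = Suc (degree p)"
  have deg: "degree (pCons 0 p) < Suc N" "degree p < N"
    unfolding N_def by (auto simp: degree_pCons_le)
  have "op_poly x y (pCons 0 p) v = (\<lambda>h. \<Sum>i<Suc N. coeff (pCons 0 p) i * (path_op x y ^^ i) v h)"
    by (rule op_poly_altdef[OF deg(1)])
  also have "\<dots> = (\<lambda>h. \<Sum>i<N. coeff p i * (path_op x y ^^ Suc i) v h)"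
    by (subst sum.lessThan_Suc_shift) simp
  also have "\<dots> = path_op x y (op_poly x y p v)"
    by (simp add: op_poly_altdef[OF deg(2)] path_op_sum path_op_smult)
  finally show ?thesis .
qed

lemma op_poly_linear: "op_poly x y [:-c, 1:] v = (\<lambda>h. path_op x y v h - c * v h)"
proof -
  have "[:-c, 1:] = pCons 0 1 - [:c:]" by simp
  then show ?thesis by (simp only: op_poly_diff op_poly_pCons_0 op_poly_1 op_poly_const)
qed

lemma op_poly_linear_mult:
  "op_poly x y ([:-c, 1:] * p) v = (\<lambda>h. path_op x y (op_poly x y p v) h - c * op_poly x y p v h)"
proof -
  have "[:-c, 1:] * p = pCons 0 p - smult c p" by simp
  then show ?thesis by (simp add: op_poly_diff op_poly_pCons_0 op_poly_smult)
qed

lemma op_poly_vadd: "op_poly x y p (\<lambda>h. f h + g h) = (\<lambda>h. op_poly x y p f h + op_poly x y p g h)"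
  unfolding op_poly_def by (simp add: path_op_pow_add algebra_simps sum.distrib)

lemma op_poly_vdiff: "op_poly x y p (\<lambda>h. f h - g h) = (\<lambda>h. op_poly x y p f h - op_poly x y p g h)"
  unfolding op_poly_def by (simp add: path_op_pow_diff algebra_simps sum_subtractf)

lemma op_poly_vsmult: "op_poly x y p (\<lambda>h. c * f h) = (\<lambda>h. c * op_poly x y p f h)"
  unfolding op_poly_def by (simp add: path_op_pow_smult algebra_simps sum_distrib_left)

lemma op_poly_vsum: "op_poly x y p (\<lambda>h. \<Sum>i\<in>A. F i h) = (\<lambda>h. \<Sum>i\<in>A. op_poly x y p (F i) h)"
  unfolding op_poly_def by (simp add: path_op_pow_sum sum_distrib_left sum.swap[of _ A])

lemma op_poly_vzero: "op_poly x y p (\<lambda>_. 0) = (\<lambda>_. 0)"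
  unfolding op_poly_def by (simp add: path_op_pow_zero)

lemma op_poly_path_op: "op_poly x y p (path_op x y v) = path_op x y (op_poly x y p v)"
  unfolding op_poly_def path_op_sum path_op_smult by (simp only: funpow_swap1)

lemma op_poly_op_poly:
  assumes "degree p < N" "degree q < N"
  shows "op_poly x y p (op_poly x y q v) h =
    (\<Sum>l<N. \<Sum>m<N. coeff p l * coeff q m * (path_op x y ^^ (l + m)) v h)"
  by (simp add: op_poly_altdef[OF assms(1)] op_poly_altdef[OF assms(2)] path_op_pow_sum
      path_op_pow_smult funpow_add sum_distrib_left mult.assoc)

lemma op_poly_cong:
  "(\<And>g'. g' \<le> g + degree p \<Longrightarrow> v g' = w g') \<Longrightarrow> op_poly x y p v g = op_poly x y p w g"
  unfolding op_poly_def by (intro sum.cong refl arg_cong2[where f = "(*)"] path_op_pow_cong) auto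

lemma op_poly_one_seq:
  assumes "k + degree p \<le> N"
  shows "op_poly x y p one_seq k = (\<Sum>h = 0..N. op_poly x y p (unit_seq h) k)"
proof -
  have "op_poly x y p one_seq k = op_poly x y p (\<lambda>g. \<Sum>h = 0..N. unit_seq h g) k"
    by (rule op_poly_cong) (use assms in \<open>auto simp: one_seq_def unit_seq_def\<close>)
  also have "\<dots> = (\<Sum>h = 0..N. op_poly x y p (unit_seq h) k)" by (simp add: op_poly_vsum)
  finally show ?thesis .
qed

lemma op_poly_path_op_unit_seq:
  "op_poly x y p (path_op x y (unit_seq h)) g =
     (if h > 0 then op_poly x y p (unit_seq (h - 1)) g else 0) + (x + y) * op_poly x y p (unit_seq h) g
     + x * y * op_poly x y p (unit_seq (h + 1)) g"
proof -
  have "path_op x y (unit_seq h) = (\<lambda>g. (if h > 0 then unit_seq (h - 1) g else 0)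
      + ((x + y) * unit_seq h g + x * y * unit_seq (h + 1) g))"
    unfolding path_op_unit_seq by (simp add: algebra_simps)
  moreover have "op_poly x y p (\<lambda>g. if h > 0 then unit_seq (h - 1) g else 0)
      = (\<lambda>g. if h > 0 then op_poly x y p (unit_seq (h - 1)) g else 0)"
    by (cases "h > 0") (auto simp: op_poly_vzero)
  ultimately show ?thesis by (simp add: op_poly_vadd op_poly_vsmult)
qed


section \<open>Perturbed orthogonal polynomials\<close>

text \<open>For \<open>e = 0\<close> these are the orthogonal polynomials of the moment functional
  \<open>p \<mapsto> (p(C) 1)(0)\<close>, see \<open>op_poly_orth_poly_unit_seq_0\<close>.\<close>

fun orth_poly :: "'a::comm_ring_1 \<Rightarrow> 'a \<Rightarrow> (nat \<Rightarrow> 'a) \<Rightarrow> nat \<Rightarrow> 'a poly" where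
  "orth_poly x y e 0 = 1"
| "orth_poly x y e (Suc 0) = [:-(x + y), 1:]"
| "orth_poly x y e (Suc (Suc i)) =
     [:-(x + y), 1:] * orth_poly x y e (Suc i) - smult (x * y) (orth_poly x y e i) + [:e i:]"

fun col_poly :: "'a::comm_ring_1 \<Rightarrow> 'a \<Rightarrow> nat \<Rightarrow> 'a poly" where
  "col_poly x y 0 = 1"
| "col_poly x y (Suc j) = [:-(1 + x + y + x * y), 1:] * orth_poly x y (\<lambda>_. 0) j"

lemma monic_linear_mult_add:
  fixes c :: "'a::comm_ring_1"
  assumes "degree p \<le> n" "coeff p n = 1" "degree q \<le> n"
  shows "degree ([:-c, 1:] * p + q) \<le> Suc n \<and> coeff ([:-c, 1:] * p + q) (Suc n) = 1"
proof
  have "degree ([:-c, 1:] * p) \<le> degree [:-c, 1:] + degree p" by (rule degree_mult_le)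
  moreover have "degree [:-c, 1:] \<le> 1" by (rule order.trans[OF degree_pCons_le]) simp
  ultimately show "degree ([:-c, 1:] * p + q) \<le> Suc n"
    using assms(1,3) by (intro degree_add_le) linarith+
  have "coeff p (Suc n) = 0" "coeff q (Suc n) = 0" using assms by (auto intro: coeff_eq_0)
  then show "coeff ([:-c, 1:] * p + q) (Suc n) = 1"
    using assms(2) by simp
qed

lemma orth_poly_monic: "degree (orth_poly x y e i) \<le> i \<and> coeff (orth_poly x y e i) i = 1"
proof (induction x y e i rule: orth_poly.induct)
  case (2 x y e)
  then show ?case by (simp add: degree_pCons_le)
next
  case (3 x y e i)
  let ?q = "[:e i:] - smult (x * y) (orth_poly x y e i)"
  have monic: "degree (orth_poly x y e (Suc i)) \<le> Suc i"
    "coeff (orth_poly x y e (Suc i)) (Suc i) = 1"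
    using "3.IH" by auto
  have "degree ?q \<le> Suc i"
    using "3.IH" degree_smult_le[of "x * y" "orth_poly x y e i"] by (intro degree_diff_le) auto
  from monic_linear_mult_add[OF monic this, of "x + y"] show ?case
    by (simp only: orth_poly.simps diff_add_eq add_diff_eq)
qed simp

lemma col_poly_monic: "degree (col_poly x y j) \<le> j \<and> coeff (col_poly x y j) j = 1"
proof (cases j)
  case (Suc i)
  have "degree (orth_poly x y (\<lambda>_. 0) i) \<le> i" "coeff (orth_poly x y (\<lambda>_. 0) i) i = 1"
    "degree (0 :: 'a poly) \<le> i"
    using orth_poly_monic by auto
  from monic_linear_mult_add[OF this, of "1 + x + y + x * y"] show ?thesis
    unfolding Suc by (simp only: col_poly.simps add_0_right)
qed simp

lemma op_poly_orth_poly_Suc_Suc: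
  "op_poly x y (orth_poly x y e (Suc (Suc i))) v = (\<lambda>h.
     path_op x y (op_poly x y (orth_poly x y e (Suc i)) v) h
     - (x + y) * op_poly x y (orth_poly x y e (Suc i)) v h
     - x * y * op_poly x y (orth_poly x y e i) v h + e i * v h)"
  by (simp only: orth_poly.simps op_poly_add op_poly_diff op_poly_smult op_poly_const
      op_poly_linear_mult)

lemma op_poly_orth_poly_unit_seq_0:
  "op_poly x y (orth_poly x y (\<lambda>_. 0) h) (unit_seq 0) = (\<lambda>g. (x * y) ^ h * unit_seq h g)"
proof (induction h rule: nat_less_induct)
  case (1 h)
  consider "h = 0" | "h = 1" | j where "h = Suc (Suc j)" by (metis not0_implies_Suc One_nat_def)
  then show ?case
  proof cases
    case 1
    then show ?thesis by (simp add: op_poly_1)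
  next
    case 2
    have "op_poly x y (orth_poly x y (\<lambda>_. 0) 1) (unit_seq 0)
        = (\<lambda>g. path_op x y (unit_seq 0) g - (x + y) * unit_seq 0 g)"
      unfolding One_nat_def orth_poly.simps op_poly_linear ..
    then show ?thesis using 2 by (auto simp: unit_seq_def path_op_def)
  next
    case 3
    have IH: "op_poly x y (orth_poly x y (\<lambda>_. 0) (Suc j)) (unit_seq 0)
        = (\<lambda>g. (x * y) ^ Suc j * unit_seq (Suc j) g)"
      "op_poly x y (orth_poly x y (\<lambda>_. 0) j) (unit_seq 0) = (\<lambda>g. (x * y) ^ j * unit_seq j g)"
      using "1.IH" 3 by auto
    show ?thesis
      unfolding 3 op_poly_orth_poly_Suc_Suc IH path_op_smult path_op_unit_seq
      by (simp add: unit_seq_def algebra_simps)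
  qed
qed

text \<open>\<open>(C - (1 + x)(1 + y)) 1 = -xy \<delta>\<^sub>0\<close>: the constant sequence is turned into a point mass.\<close>

lemma op_poly_col_poly:
  "op_poly x y (col_poly x y (Suc j)) one_seq = (\<lambda>g. - ((x * y) ^ Suc j) * unit_seq j g)"
proof -
  have start: "(\<lambda>g. path_op x y one_seq g - (1 + x + y + x * y) * one_seq g)
      = (\<lambda>g. - (x * y) * unit_seq 0 g)"
    by (auto simp: path_op_def one_seq_def unit_seq_def)
  have "op_poly x y (col_poly x y (Suc j)) one_seq
     = (\<lambda>g. op_poly x y (orth_poly x y (\<lambda>_. 0) j) (path_op x y one_seq) g
         - (1 + x + y + x * y) * op_poly x y (orth_poly x y (\<lambda>_. 0) j) one_seq g)"
    unfolding col_poly.simps op_poly_linear_mult op_poly_path_op ..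
  also have "\<dots> = op_poly x y (orth_poly x y (\<lambda>_. 0) j)
      (\<lambda>g. path_op x y one_seq g - (1 + x + y + x * y) * one_seq g)"
    by (simp add: op_poly_vdiff op_poly_vsmult)
  also have "\<dots> = (\<lambda>g. - ((x * y) ^ Suc j) * unit_seq j g)"
    unfolding start op_poly_vsmult op_poly_orth_poly_unit_seq_0 by (simp add: algebra_simps)
  finally show ?thesis .
qed


section \<open>An explicit solution of the row recurrence\<close>

abbreviation rec_rhs :: "(nat \<Rightarrow> nat \<Rightarrow> 'a::comm_ring_1) \<Rightarrow> 'a \<Rightarrow> 'a \<Rightarrow> nat \<Rightarrow> nat \<Rightarrow> nat \<Rightarrow> 'a"
  where "rec_rhs f t c k i h \<equiv> (if h > 0 then f (i + 1) (h - 1) else 0) + t * f (i + 1) (h + 1)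
      - t * f i h + c * (if h = k then 1 else 0)"

text \<open>Row \<open>i\<close> of the solution is \<open>\<delta>\<^bsub>k+i\<^esub>\<close> plus a tail supported at a single height below \<open>k\<close>,
  periodic in \<open>i\<close> with period \<open>2k + 2\<close> up to the factor \<open>t\<^sup>k\<^sup>+\<^sup>1\<close>.\<close>

definition tail_base :: "nat \<Rightarrow> 'a::comm_ring_1 \<Rightarrow> nat \<Rightarrow> nat \<Rightarrow> 'a" where
  "tail_base k t j h = (if 1 \<le> j \<and> j \<le> k \<and> h = k - j then t ^ j
     else if k + 2 \<le> j \<and> h = j - (k + 2) then - (t ^ (k + 1)) else 0)"

definition tail :: "nat \<Rightarrow> 'a::comm_ring_1 \<Rightarrow> nat \<Rightarrow> nat \<Rightarrow> 'a" where
  "tail k t i h = t ^ (i div (2 * k + 2) * (k + 1)) * tail_base k t (i mod (2 * k + 2)) h"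

definition row_formula :: "nat \<Rightarrow> 'a::comm_ring_1 \<Rightarrow> nat \<Rightarrow> nat \<Rightarrow> 'a" where
  "row_formula k t i h = (if h = k + i then 1 else 0) + tail k t i h"

text \<open>The constants that keep the tails inside the strip of heights below \<open>k\<close>.\<close>

definition correction :: "nat \<Rightarrow> 'a::comm_ring_1 \<Rightarrow> nat \<Rightarrow> 'a" where
  "correction k t i =
     (if (2 * k + 2) dvd (i + 2) then t ^ ((i + 2) div (2 * k + 2) * (k + 1)) else 0)
     - (if (2 * k + 2) dvd i then t ^ (i div (2 * k + 2) * (k + 1) + 1) else 0)"

lemma tail_block:
  assumes "r < 2 * k + 2"
  shows "tail k t (P * (2 * k + 2) + r) h = t ^ (P * (k + 1)) * tail_base k t r h"
proof -
  have "r < q \<Longrightarrow> (P * q + r) div q = P \<and> (P * q + r) mod q = r" for q :: nat by auto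
  then have "(P * (2 * k + 2) + r) div (2 * k + 2) = P" "(P * (2 * k + 2) + r) mod (2 * k + 2) = r"
    using assms by blast+
  then show ?thesis unfolding tail_def by simp
qed

lemma tail_small: "j < 2 * k + 2 \<Longrightarrow> tail k t j h = tail_base k t j h"
  by (simp add: tail_def)

lemma tail_period: "tail k t (i + (2 * k + 2)) h = t ^ (k + 1) * tail k t i h"
proof -
  have q: "2 * k + 2 \<noteq> 0" by simp
  show ?thesis
    unfolding tail_def mod_add_self2 div_add_self2[OF q] by (simp add: power_add algebra_simps)
qed

lemma correction_period: "correction k t (i + (2 * k + 2)) = t ^ (k + 1) * correction k t i"
proof -
  have q: "2 * k + 2 \<noteq> 0" by simp
  have shift: "i + (2 * k + 2) + 2 = (i + 2) + (2 * k + 2)" by simp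
  show ?thesis
    unfolding correction_def shift dvd_add_triv_right_iff div_add_self2[OF q]
    by (simp add: power_add algebra_simps)
qed

lemma correction_small:
  assumes "i < 2 * k + 2"
  shows "correction k t i = (if i = 2 * k then t ^ (k + 1) else 0) - (if i = 0 then t else 0)"
proof -
  have "(2 * k + 2) dvd (i + 2) \<longleftrightarrow> i = 2 * k"
  proof
    assume "(2 * k + 2) dvd (i + 2)"
    then obtain c where c: "i + 2 = (2 * k + 2) * c" by blast
    then have "c = 1" using assms by (cases c; cases "c - 1") auto
    then show "i = 2 * k" using c by simp
  qed auto
  moreover have "(2 * k + 2) dvd i \<longleftrightarrow> i = 0"
    using assms by (auto dest: dvd_imp_le)
  ultimately show ?thesis unfolding correction_def using assms by auto
qed

lemma tail_base_up: "1 \<le> j \<Longrightarrow> j \<le> k \<Longrightarrow> tail_base k t j h = (if h = k - j then t ^ j else 0)"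
  by (simp add: tail_base_def)

lemma tail_base_down:
  "k + 2 \<le> j \<Longrightarrow> tail_base k t j h = (if h + (k + 2) = j then - (t ^ (k + 1)) else 0)"
  by (auto simp: tail_base_def)

lemma tail_base_zero: "j = 0 \<or> j = k + 1 \<Longrightarrow> tail_base k t j h = 0"
  by (auto simp: tail_base_def)

lemma tail_base_rec_start:
  assumes "i = 0" "k \<ge> 2"
  shows "tail_base k t (i + 2) h = rec_rhs (tail_base k t) t (- t) k i h"
proof -
  have a: "tail_base k t (i + 2) h = (if h = k - 2 then t * t else 0)"
    using assms by (auto simp: tail_base_up power2_eq_square numeral_2_eq_2)
  have b: "tail_base k t (i + 1) h' = (if h' = k - 1 then t else 0)" for h'
    using assms by (simp add: tail_base_up)
  have c: "tail_base k t i h = 0" using assms by (simp add: tail_base_zero)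
  consider "h = k - 2" | "h = k" | "h \<noteq> k - 2" "h \<noteq> k" by blast
  then show ?thesis
  proof cases
    case 1
    then have "\<not> (h > 0 \<and> h - 1 = k - 1)" "h + 1 = k - 1" "h \<noteq> k" using assms by auto
    then show ?thesis unfolding a b c using 1 by simp
  next
    case 2
    then have "h > 0 \<and> h - 1 = k - 1" "h + 1 \<noteq> k - 1" "h \<noteq> k - 2" using assms by auto
    then show ?thesis unfolding a b c using 2 by simp
  next
    case 3
    then have "\<not> (h > 0 \<and> h - 1 = k - 1)" "h + 1 \<noteq> k - 1" using assms by auto
    then show ?thesis unfolding a b c using 3 by auto
  qed
qed

lemma tail_base_rec_up:
  assumes "1 \<le> i" "i + 2 \<le> k"
  shows "tail_base k t (i + 2) h = rec_rhs (tail_base k t) t 0 k i h"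
proof -
  have a: "tail_base k t (i + 2) h = (if h = k - (i + 2) then t ^ (i + 2) else 0)"
    using assms by (simp add: tail_base_up)
  have b: "tail_base k t (i + 1) h' = (if h' = k - (i + 1) then t ^ (i + 1) else 0)" for h'
    using assms by (simp add: tail_base_up)
  have c: "tail_base k t i h = (if h = k - i then t ^ i else 0)"
    using assms by (simp add: tail_base_up)
  consider "h = k - (i + 2)" | "h = k - i" | "h \<noteq> k - (i + 2)" "h \<noteq> k - i" by blast
  then show ?thesis
  proof cases
    case 1
    then have "\<not> (h > 0 \<and> h - 1 = k - (i + 1))" "h + 1 = k - (i + 1)" "h \<noteq> k - i"
      using assms by auto
    then show ?thesis unfolding a b c using 1 by (simp add: power_add power2_eq_square algebra_simps)
  next
    case 2
    then have "h > 0 \<and> h - 1 = k - (i + 1)" "h + 1 \<noteq> k - (i + 1)" "h \<noteq> k - (i + 2)"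
      using assms by auto
    then show ?thesis unfolding a b c using 2 by (simp add: power_add algebra_simps)
  next
    case 3
    then have "\<not> (h > 0 \<and> h - 1 = k - (i + 1))" "h + 1 \<noteq> k - (i + 1)" using assms by auto
    then show ?thesis unfolding a b c using 3 by auto
  qed
qed

lemma tail_base_rec_top:
  assumes "1 \<le> i" "i + 1 = k"
  shows "tail_base k t (i + 2) h = rec_rhs (tail_base k t) t 0 k i h"
proof -
  have a: "tail_base k t (i + 2) h = 0" using assms by (simp add: tail_base_zero)
  have b: "tail_base k t (i + 1) h' = (if h' = 0 then t ^ (i + 1) else 0)" for h'
    using assms by (simp add: tail_base_up)
  have "k - i = 1" using assms by simp
  then have c: "tail_base k t i h = (if h = 1 then t ^ i else 0)"
    using assms by (simp add: tail_base_up)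
  show ?thesis
  proof (cases "h = 1")
    case True
    then show ?thesis unfolding a b c by (simp add: algebra_simps)
  next
    case False
    then have "\<not> (h > 0 \<and> h - 1 = 0)" by auto
    then show ?thesis unfolding a b c using False by auto
  qed
qed

lemma tail_base_rec_peak:
  assumes "i = k" "k \<ge> 1"
  shows "tail_base k t (i + 2) h = rec_rhs (tail_base k t) t 0 k i h"
proof -
  have a: "tail_base k t (i + 2) h = (if h = 0 then - (t ^ (k + 1)) else 0)"
    using assms by (simp add: tail_base_down)
  have b: "tail_base k t (i + 1) h' = 0" for h' using assms by (simp add: tail_base_zero)
  have c: "tail_base k t i h = (if h = 0 then t ^ k else 0)" using assms by (simp add: tail_base_up)
  show ?thesis unfolding a b c by simp
qed

lemma tail_base_rec_gap:
  assumes "i = k + 1" "k \<ge> 2"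
  shows "tail_base k t (i + 2) h = rec_rhs (tail_base k t) t 0 k i h"
proof -
  have a: "tail_base k t (i + 2) h = (if h = 1 then - (t ^ (k + 1)) else 0)"
    using assms by (auto simp: tail_base_down)
  have b: "tail_base k t (i + 1) h' = (if h' = 0 then - (t ^ (k + 1)) else 0)" for h'
    using assms by (simp add: tail_base_down)
  have c: "tail_base k t i h = 0" using assms by (simp add: tail_base_zero)
  show ?thesis
  proof (cases "h = 1")
    case True
    then show ?thesis unfolding a b c by simp
  next
    case False
    then have "\<not> (h > 0 \<and> h - 1 = 0)" by auto
    then show ?thesis unfolding a b c using False by auto
  qed
qed

lemma tail_base_rec_down:
  assumes "k + 2 \<le> i"
  shows "tail_base k t (i + 2) h = rec_rhs (tail_base k t) t 0 k i h"
proof -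
  let ?T = "- (t ^ (k + 1))"
  have a: "tail_base k t (i + 2) h = (if h + (k + 2) = i + 2 then ?T else 0)"
    using assms by (simp add: tail_base_down)
  have b: "tail_base k t (i + 1) h' = (if h' + (k + 2) = i + 1 then ?T else 0)" for h'
    using assms by (simp add: tail_base_down)
  have c: "tail_base k t i h = (if h + (k + 2) = i then ?T else 0)"
    using assms by (simp add: tail_base_down)
  consider "h + (k + 2) = i + 2" | "h + (k + 2) = i" | "h + (k + 2) \<noteq> i + 2" "h + (k + 2) \<noteq> i"
    by blast
  then show ?thesis
  proof cases
    case 1
    then have "h > 0 \<and> h - 1 + (k + 2) = i + 1" "h + 1 + (k + 2) \<noteq> i + 1" "h + (k + 2) \<noteq> i"
      using assms by auto
    then show ?thesis unfolding a b c using 1 by simp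
  next
    case 2
    then have "\<not> (h > 0 \<and> h - 1 + (k + 2) = i + 1)" "h + 1 + (k + 2) = i + 1" by auto
    then show ?thesis unfolding a b c using 2 by simp
  next
    case 3
    then have "\<not> (h > 0 \<and> h - 1 + (k + 2) = i + 1)" "h + 1 + (k + 2) \<noteq> i + 1" by auto
    then show ?thesis unfolding a b c using 3 by auto
  qed
qed

lemma tail_base_rec_end:
  assumes "k \<ge> 2" "i = 2 * k"
  shows "rec_rhs (tail_base k t) t (t ^ (k + 1)) k i h = 0"
proof -
  let ?T = "- (t ^ (k + 1))"
  have b: "tail_base k t (i + 1) h' = (if h' = k - 1 then ?T else 0)" for h'
    using assms by (auto simp: tail_base_down)
  have c: "tail_base k t i h = (if h = k - 2 then ?T else 0)"
    using assms by (auto simp: tail_base_down)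
  consider "h = k" | "h = k - 2" | "h \<noteq> k" "h \<noteq> k - 2" by blast
  then show ?thesis
  proof cases
    case 1
    then have "h > 0 \<and> h - 1 = k - 1" "h + 1 \<noteq> k - 1" "h \<noteq> k - 2" using assms by auto
    then show ?thesis unfolding b c using 1 by simp
  next
    case 2
    then have "\<not> (h > 0 \<and> h - 1 = k - 1)" "h + 1 = k - 1" "h \<noteq> k" using assms by auto
    then show ?thesis unfolding b c using 2 by simp
  next
    case 3
    then have "\<not> (h > 0 \<and> h - 1 = k - 1)" "h + 1 \<noteq> k - 1" using assms by auto
    then show ?thesis unfolding b c using 3 by auto
  qed
qed

lemma tail_base_wrap:
  assumes "k \<ge> 1"
  shows "t ^ (k + 1) * tail_base k t 1 h = - t * tail_base k t (2 * k + 1) h"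
proof -
  have "tail_base k t (2 * k + 1) h = (if h = k - 1 then - (t ^ (k + 1)) else 0)"
    using assms by (auto simp: tail_base_down)
  moreover have "tail_base k t 1 h = (if h = k - 1 then t else 0)"
    using assms by (simp add: tail_base_up)
  ultimately show ?thesis by (simp add: algebra_simps)
qed

lemma tail_base_rec:
  assumes "i + 2 < 2 * k + 2"
  shows "tail_base k t (i + 2) h = rec_rhs (tail_base k t) t (correction k t i) k i h"
proof -
  have corr: "correction k t i = (if i = 0 then - t else 0)"
    using assms correction_small[of i k t] by simp
  consider "i = 0" "k = 1" | "i = 0" "k \<ge> 2" | "1 \<le> i" "i + 2 \<le> k" | "1 \<le> i" "i + 1 = k"
    | "i = k" "k \<ge> 1" | "i = k + 1" "k \<ge> 2" | "k + 2 \<le> i"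
    using assms by linarith
  then show ?thesis
  proof cases
    case 1
    then show ?thesis unfolding corr by (auto simp: tail_base_def)
  next
    case 2
    then have "correction k t i = - t" using corr by simp
    then show ?thesis by (simp only: tail_base_rec_start[OF 2])
  next
    case 3
    then have "correction k t i = 0" using corr by simp
    then show ?thesis by (simp only: tail_base_rec_up[OF 3])
  next
    case 4
    then have "correction k t i = 0" using corr by simp
    then show ?thesis by (simp only: tail_base_rec_top[OF 4])
  next
    case 5
    then have "correction k t i = 0" using corr by simp
    then show ?thesis by (simp only: tail_base_rec_peak[OF 5])
  next
    case 6
    then have "correction k t i = 0" using corr by simp
    then show ?thesis by (simp only: tail_base_rec_gap[OF 6])
  next
    case 7
    then have "correction k t i = 0" using corr by simp
    then show ?thesis by (simp only: tail_base_rec_down[OF 7])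
  qed
qed

lemma tail_rec_small:
  assumes i: "i < 2 * k + 2"
  shows "tail k t (i + 2) h = rec_rhs (tail k t) t (correction k t i) k i h"
proof -
  have corr: "correction k t i = (if i = 2 * k then t ^ (k + 1) else 0) - (if i = 0 then t else 0)"
    using i by (rule correction_small)
  consider "i + 2 < 2 * k + 2" | "i = 2 * k" | "i = 2 * k + 1" using i by linarith
  then show ?thesis
  proof cases
    case 1
    then have tail: "tail k t (i + 2) h' = tail_base k t (i + 2) h'"
      "tail k t (i + 1) h' = tail_base k t (i + 1) h'" "tail k t i h' = tail_base k t i h'" for h'
      by (simp_all add: tail_small)
    show ?thesis unfolding tail by (rule tail_base_rec[OF 1])
  next
    case 2
    have "tail k t (1 * (2 * k + 2) + 0) h' = t ^ (1 * (k + 1)) * tail_base k t 0 h'" for h'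
      by (rule tail_block) simp
    then have tail: "tail k t (i + 2) h' = 0" "tail k t (i + 1) h' = tail_base k t (i + 1) h'"
      "tail k t i h' = tail_base k t i h'" for h'
      using 2 by (simp_all add: tail_small tail_base_zero)
    consider "k = 0" | "k = 1" | "k \<ge> 2" by linarith
    then show ?thesis
    proof cases
      case 3
      then have c: "correction k t i = t ^ (k + 1)" using corr 2 by simp
      show ?thesis unfolding tail c by (rule tail_base_rec_end[OF 3 2, symmetric])
    qed (unfold tail corr, use 2 in \<open>auto simp: tail_base_def power2_eq_square\<close>)+
  next
    case 3
    have "tail k t (1 * (2 * k + 2) + 1) h' = t ^ (1 * (k + 1)) * tail_base k t 1 h'"
      "tail k t (1 * (2 * k + 2) + 0) h' = t ^ (1 * (k + 1)) * tail_base k t 0 h'" for h'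
      by (rule tail_block; simp)+
    then have tail: "tail k t (i + 2) h' = t ^ (k + 1) * tail_base k t 1 h'"
      "tail k t (i + 1) h' = 0" "tail k t i h' = tail_base k t i h'" for h'
      using 3 by (simp_all add: tail_small tail_base_zero)
    show ?thesis
    proof (cases "k = 0")
      case False
      then show ?thesis unfolding tail corr using tail_base_wrap[of k t h] 3 by simp
    qed (unfold tail corr, use 3 in \<open>simp add: tail_base_def\<close>)
  qed
qed

lemma tail_rec: "tail k t (i + 2) h = rec_rhs (tail k t) t (correction k t i) k i h"
proof (induction i arbitrary: h rule: less_induct)
  case (less i)
  show ?case
  proof (cases "i < 2 * k + 2")
    case True
    then show ?thesis by (rule tail_rec_small)
  next
    case False
    define j where "j = i - (2 * k + 2)"
    have i: "i = j + (2 * k + 2)" using False j_def by simp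
    have shift: "i + 2 = (j + 2) + (2 * k + 2)" "i + 1 = (j + 1) + (2 * k + 2)" using i by simp_all
    have "j < i" using i by simp
    then show ?thesis
      unfolding shift unfolding i tail_period correction_period less.IH[OF \<open>j < i\<close>]
      by (simp add: algebra_simps)
  qed
qed

lemma row_formula_rec:
  "row_formula k t (i + 2) h = rec_rhs (row_formula k t) t (correction k t i) k i h"
proof -
  have "(if h = k + (i + 2) then 1 else 0 :: 'a) =
      rec_rhs (\<lambda>i h. if h = k + i then 1 else 0) t 0 k i h"
    by auto
  then show ?thesis unfolding row_formula_def tail_rec[of k t i h] by (simp add: algebra_simps)
qed

definition row_coeff :: "'a::comm_ring_1 \<Rightarrow> 'a \<Rightarrow> nat \<Rightarrow> nat \<Rightarrow> nat \<Rightarrow> 'a" where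
  "row_coeff x y k i h = op_poly x y (orth_poly x y (correction k (x * y)) i) (unit_seq h) k"

lemma row_coeff_rec:
  "row_coeff x y k (i + 2) h = rec_rhs (row_coeff x y k) (x * y) (correction k (x * y) i) k i h"
proof -
  have e: "i + 2 = Suc (Suc i)" "i + 1 = Suc i" by simp_all
  show ?thesis
    unfolding row_coeff_def e op_poly_orth_poly_Suc_Suc op_poly_path_op[symmetric]
      op_poly_path_op_unit_seq
    by (simp add: unit_seq_def algebra_simps)
qed

lemma row_coeff_eq_row_formula: "row_coeff x y k i h = row_formula k (x * y) i h"
proof (induction i arbitrary: h rule: nat_less_induct)
  case (1 i)
  consider "i = 0" | "i = 1" | j where "i = j + 2" by (metis add_2_eq_Suc' not0_implies_Suc One_nat_def)
  then show ?case
  proof cases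
    case 1
    then show ?thesis
      by (simp add: row_coeff_def op_poly_1 row_formula_def tail_def tail_base_def unit_seq_def)
  next
    case 2
    have "row_coeff x y k 1 h = path_op x y (unit_seq h) k - (x + y) * unit_seq h k"
      unfolding row_coeff_def One_nat_def orth_poly.simps op_poly_linear ..
    then show ?thesis
      using 2 by (auto simp: row_formula_def tail_def tail_base_def unit_seq_def path_op_def)
  next
    case 3
    then have "row_coeff x y k (j + 1) h' = row_formula k (x * y) (j + 1) h'"
      "row_coeff x y k j h' = row_formula k (x * y) j h'" for h'
      using "1.IH" by auto
    then show ?thesis unfolding 3 row_coeff_rec row_formula_rec by simp
  qed
qed


section \<open>Triangular factorisation of the Hankel matrix\<close>

definition left_mat :: "'a::comm_ring_1 \<Rightarrow> 'a \<Rightarrow> nat \<Rightarrow> nat \<Rightarrow> 'a mat" where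
  "left_mat x y k n = mat n n (\<lambda>(i, l). coeff (orth_poly x y (correction k (x * y)) i) l)"

definition right_mat :: "'a::comm_ring_1 \<Rightarrow> 'a \<Rightarrow> nat \<Rightarrow> 'a mat" where
  "right_mat x y n = mat n n (\<lambda>(m, j). coeff (col_poly x y j) m)"

definition mixed_moment :: "'a::comm_ring_1 \<Rightarrow> 'a \<Rightarrow> nat \<Rightarrow> nat \<Rightarrow> nat \<Rightarrow> 'a" where
  "mixed_moment x y k i j =
     op_poly x y (orth_poly x y (correction k (x * y)) i) (op_poly x y (col_poly x y j) one_seq) k"

lemma det_left_mat: "det (left_mat x y k n) = 1"
proof -
  have "det (left_mat x y k n) = prod_list (diag_mat (left_mat x y k n))"
  proof (rule det_lower_triangular[of n])
    fix i j
    assume "i < j" "j < n"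
    then show "left_mat x y k n $$ (i, j) = 0"
      using orth_poly_monic[of x y "correction k (x * y)" i] by (auto simp: left_mat_def intro: coeff_eq_0)
  qed (simp add: left_mat_def)
  also have "\<dots> = 1"
    unfolding prod_list_diag_prod by (rule prod.neutral) (auto simp: left_mat_def orth_poly_monic)
  finally show ?thesis .
qed

lemma det_right_mat: "det (right_mat x y n) = 1"
proof -
  have "det (right_mat x y n) = prod_list (diag_mat (right_mat x y n))"
  proof (rule det_upper_triangular[of _ n])
    show "upper_triangular (right_mat x y n)"
    proof
      fix i j
      assume "j < i" "i < dim_row (right_mat x y n)"
      then show "right_mat x y n $$ (i, j) = 0"
        using col_poly_monic[of x y j] by (auto simp: right_mat_def intro: coeff_eq_0)
    qed
  qed (simp add: right_mat_def)
  also have "\<dots> = 1"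
    unfolding prod_list_diag_prod by (rule prod.neutral) (auto simp: right_mat_def col_poly_monic)
  finally show ?thesis .
qed

lemma left_hankel_right:
  "left_mat x y k n * mat n n (\<lambda>(i, j). Ppos_total x y (i + j) k) * right_mat x y n =
     mat n n (\<lambda>(i, j). mixed_moment x y k i j)"
proof (rule eq_matI)
  fix i j
  assume "i < dim_row (mat n n (\<lambda>(i, j). mixed_moment x y k i j))"
    "j < dim_col (mat n n (\<lambda>(i, j). mixed_moment x y k i j))"
  then have i: "i < n" and j: "j < n" by auto
  let ?P = "orth_poly x y (correction k (x * y)) i" and ?Q = "col_poly x y j"
  have dP: "degree ?P < n" using orth_poly_monic[of x y "correction k (x * y)" i] i by linarith
  have dQ: "degree ?Q < n" using col_poly_monic[of x y j] j by linarith
  have "(left_mat x y k n * mat n n (\<lambda>(i, j). Ppos_total x y (i + j) k) * right_mat x y n) $$ (i, j)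
      = (\<Sum>m = 0..<n. (\<Sum>l = 0..<n. coeff ?P l * Ppos_total x y (l + m) k) * coeff ?Q m)"
    using i j by (simp add: left_mat_def right_mat_def scalar_prod_def)
  also have "\<dots> = (\<Sum>m<n. \<Sum>l<n. coeff ?P l * coeff ?Q m * (path_op x y ^^ (l + m)) one_seq k)"
    unfolding sum_distrib_right lessThan_atLeast0
    by (intro sum.cong refl) (simp add: Ppos_total_eq_path_op mult_ac)
  also have "\<dots> = (\<Sum>l<n. \<Sum>m<n. coeff ?P l * coeff ?Q m * (path_op x y ^^ (l + m)) one_seq k)"
    by (rule sum.swap)
  also have "\<dots> = mixed_moment x y k i j"
    unfolding mixed_moment_def by (rule op_poly_op_poly[OF dP dQ, symmetric])
  finally show "(left_mat x y k n * mat n n (\<lambda>(i, j). Ppos_total x y (i + j) k) * right_mat x y n) $$ (i, j)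
      = mat n n (\<lambda>(i, j). mixed_moment x y k i j) $$ (i, j)"
    using i j by simp
qed (auto simp: left_mat_def right_mat_def)

lemma det_hankel_eq_det_mixed_moment:
  "det (mat n n (\<lambda>(i, j). Ppos_total x y (i + j) k)) = det (mat n n (\<lambda>(i, j). mixed_moment x y k i j))"
proof -
  let ?H = "mat n n (\<lambda>(i, j). Ppos_total x y (i + j) k)"
  have carrier: "left_mat x y k n \<in> carrier_mat n n" "?H \<in> carrier_mat n n"
    "right_mat x y n \<in> carrier_mat n n"
    by (auto simp: left_mat_def right_mat_def)
  have "det (mat n n (\<lambda>(i, j). mixed_moment x y k i j)) = det (left_mat x y k n * ?H * right_mat x y n)"
    by (simp add: left_hankel_right)
  also have "\<dots> = det (left_mat x y k n) * det ?H * det (right_mat x y n)"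
    using carrier by (simp add: det_mult[of _ n])
  finally show ?thesis by (simp add: det_left_mat det_right_mat)
qed

lemma mixed_moment_0:
  assumes "i < n"
  shows "mixed_moment x y k i 0 = (\<Sum>h = 0..k + n. row_formula k (x * y) i h)"
proof -
  have "k + degree (orth_poly x y (correction k (x * y)) i) \<le> k + n"
    using orth_poly_monic[of x y "correction k (x * y)" i] assms by simp
  then show ?thesis
    unfolding mixed_moment_def col_poly.simps op_poly_1
    by (simp add: op_poly_one_seq row_coeff_eq_row_formula[symmetric] row_coeff_def)
qed

lemma mixed_moment_Suc:
  "mixed_moment x y k i (Suc j) = - ((x * y) ^ Suc j) * row_formula k (x * y) i j"
  unfolding mixed_moment_def op_poly_col_poly op_poly_vsmult row_coeff_eq_row_formula[symmetric]
    row_coeff_def ..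

text \<open>Column \<open>j + 1\<close> of the mixed moments is a multiple of column \<open>j\<close> of \<open>row_formula_mat\<close>, and
  column \<open>0\<close> is the sum of all its columns; hence the last column of \<open>row_formula_mat\<close> collects
  all remaining heights.\<close>

definition row_formula_mat :: "nat \<Rightarrow> 'a::comm_ring_1 \<Rightarrow> nat \<Rightarrow> 'a mat" where
  "row_formula_mat k t n = mat n n (\<lambda>(i, c).
     if c < n - 1 then row_formula k t i c else (\<Sum>h = n - 1..k + n. row_formula k t i h))"

definition column_ops_mat :: "'a::comm_ring_1 \<Rightarrow> nat \<Rightarrow> 'a mat" where
  "column_ops_mat t n = mat n n (\<lambda>(c, j). if j = 0 then 1 else if c = j - 1 then - (t ^ j) else 0)"

lemma mixed_moment_mat_factor:
  assumes "n \<ge> 1"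
  shows "mat n n (\<lambda>(i, j). mixed_moment x y k i j) = row_formula_mat k (x * y) n * column_ops_mat (x * y) n"
    (is "_ = ?X * ?E")
proof (rule eq_matI)
  fix i j
  assume "i < dim_row (?X * ?E)" "j < dim_col (?X * ?E)"
  then have i: "i < n" and j: "j < n" by (auto simp: row_formula_mat_def column_ops_mat_def)
  obtain m where m: "n = Suc m" using assms by (cases n) auto
  have prod: "(?X * ?E) $$ (i, j) = (\<Sum>c = 0..<n. ?X $$ (i, c) * ?E $$ (c, j))"
    using i j by (simp add: row_formula_mat_def column_ops_mat_def scalar_prod_def)
  show "mat n n (\<lambda>(i, j). mixed_moment x y k i j) $$ (i, j) = (?X * ?E) $$ (i, j)"
  proof (cases j)
    case 0
    have "(\<Sum>c = 0..<n. ?X $$ (i, c) * ?E $$ (c, j)) =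
       (\<Sum>c = 0..<m. row_formula k (x * y) i c) + (\<Sum>h = m..k + n. row_formula k (x * y) i h)"
      unfolding m using i 0 m by (simp add: row_formula_mat_def column_ops_mat_def)
    also have "\<dots> = (\<Sum>h = 0..k + n. row_formula k (x * y) i h)"
      using sum.atLeastLessThan_concat[of 0 m "Suc (k + n)" "row_formula k (x * y) i"] m
      by (simp add: atLeastLessThanSuc_atLeastAtMost)
    finally show ?thesis using prod i 0 by (simp add: mixed_moment_0)
  next
    case (Suc j')
    have "(\<Sum>c = 0..<n. ?X $$ (i, c) * ?E $$ (c, j)) =
       (\<Sum>c = 0..<n. if c = j' then ?X $$ (i, c) * (- ((x * y) ^ j)) else 0)"
      by (rule sum.cong) (use Suc j in \<open>auto simp: column_ops_mat_def\<close>)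
    also have "\<dots> = - ((x * y) ^ j) * row_formula k (x * y) i j'"
      using i j Suc by (simp add: row_formula_mat_def)
    finally show ?thesis using prod i j Suc by (simp add: mixed_moment_Suc)
  qed
qed (auto simp: row_formula_mat_def column_ops_mat_def)


section \<open>Evaluating the determinant\<close>

lemma det_expand_row_single:
  assumes A: "A \<in> carrier_mat n n" and r: "r < n" and c: "c < n"
    and zero: "\<And>j. j < n \<Longrightarrow> j \<noteq> c \<Longrightarrow> A $$ (r, j) = 0"
  shows "det A = (-1) ^ (r + c) * A $$ (r, c) * det (mat_delete A r c)"
proof -
  have "det A = (\<Sum>j<n. A $$ (r, j) * cofactor A r j)" by (rule laplace_expansion_row[OF A r])
  also have "\<dots> = (\<Sum>j<n. if j = c then A $$ (r, c) * cofactor A r c else 0)"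
    by (rule sum.cong) (auto simp: zero)
  finally show ?thesis using c by (simp add: cofactor_def)
qed

lemma det_expand_col_single:
  assumes A: "A \<in> carrier_mat n n" and r: "r < n" and c: "c < n"
    and zero: "\<And>i. i < n \<Longrightarrow> i \<noteq> r \<Longrightarrow> A $$ (i, c) = 0"
  shows "det A = (-1) ^ (r + c) * A $$ (r, c) * det (mat_delete A r c)"
proof -
  have "det A = (\<Sum>i<n. A $$ (i, c) * cofactor A i c)" by (rule laplace_expansion_column[OF A c])
  also have "\<dots> = (\<Sum>i<n. if i = r then A $$ (r, c) * cofactor A r c else 0)"
    by (rule sum.cong) (auto simp: zero)
  finally show ?thesis using r by (simp add: cofactor_def)
qed

lemma det_zero_row:
  assumes "A \<in> carrier_mat n n" "r < n" "\<And>j. j < n \<Longrightarrow> A $$ (r, j) = 0"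
  shows "det A = 0"
  using det_expand_row_single[OF assms(1,2,2)] assms(2,3) by simp

lemma det_zero_col:
  assumes "A \<in> carrier_mat n n" "c < n" "\<And>i. i < n \<Longrightarrow> A $$ (i, c) = 0"
  shows "det A = 0"
  using det_expand_col_single[OF assms(1,2,2)] assms(2,3) by simp

lemma Suc_choose_2: "Suc a choose 2 = a + (a choose 2)"
  by (simp add: numeral_2_eq_2)

lemma two_mult_Suc_choose_2: "2 * (Suc a choose 2) = Suc a * a"
  by (induction a) (auto simp: numeral_2_eq_2)

lemma sum_Suc_eq_Suc_choose_2: "(\<Sum>j<m. Suc j) = Suc m choose 2"
  by (induction m) (simp_all add: Suc_choose_2)

lemma det_column_ops_mat:
  assumes "n \<ge> 1"
  shows "det (column_ops_mat t n) = t ^ (n choose 2)"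
proof -
  obtain m where m: "n = Suc m" using assms by (cases n) auto
  have "det (column_ops_mat t n) = (-1) ^ m * det (mat_delete (column_ops_mat t n) m 0)"
    by (subst det_expand_row_single[of _ n m 0]) (auto simp: column_ops_mat_def m)
  also have "mat_delete (column_ops_mat t n) m 0 = mat m m (\<lambda>(i, j). if i = j then - (t ^ Suc j) else 0)"
    by (rule eq_matI) (auto simp: mat_delete_def column_ops_mat_def m)
  also have "det \<dots> = (\<Prod>j = 0..<m. - (t ^ Suc j))"
    by (subst det_upper_triangular[of _ m]) (auto simp: prod_list_diag_prod)
  also have "\<dots> = (\<Prod>j = 0..<m. (-1) * t ^ Suc j)" by simp
  also have "\<dots> = (-1) ^ m * t ^ (\<Sum>j<m. Suc j)"
    by (simp only: prod.distrib prod_constant card_atLeastLessThan power_sum lessThan_atLeast0) simp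
  finally show ?thesis by (simp add: sum_Suc_eq_Suc_choose_2 m flip: mult.assoc power_add)
qed

lemma det_hankel_eq_det_row_formula_mat:
  assumes "n \<ge> 1"
  shows "det (mat n n (\<lambda>(i, j). Ppos_total x y (i + j) k)) =
    det (row_formula_mat k (x * y) n) * (x * y) ^ (n choose 2)"
proof -
  have "det (mat n n (\<lambda>(i, j). Ppos_total x y (i + j) k)) =
      det (row_formula_mat k (x * y) n * column_ops_mat (x * y) n)"
    by (simp add: det_hankel_eq_det_mixed_moment mixed_moment_mat_factor[OF assms])
  also have "\<dots> = det (row_formula_mat k (x * y) n) * det (column_ops_mat (x * y) n)"
    by (rule det_mult[of _ n]) (auto simp: row_formula_mat_def column_ops_mat_def)
  finally show ?thesis by (simp add: det_column_ops_mat[OF assms])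
qed

lemma tail_base_ge: "j < 2 * k + 2 \<Longrightarrow> h \<ge> k \<Longrightarrow> tail_base k t j h = 0"
  by (auto simp: tail_base_def)

lemma tail_ge: "h \<ge> k \<Longrightarrow> tail k t i h = 0"
  unfolding tail_def by (simp add: tail_base_ge)

lemma tail_mult_eq_0: "tail k t ((k + 1) * P) h = 0"
proof -
  obtain M where "P = 2 * M \<or> P = 2 * M + 1" by (metis oddE evenE)
  then show ?thesis
  proof
    assume "P = 2 * M"
    then have "(k + 1) * P = M * (2 * k + 2) + 0" by (simp add: algebra_simps)
    then show ?thesis using tail_block[of 0 k t M h] by (simp add: tail_base_zero)
  next
    assume "P = 2 * M + 1"
    then have "(k + 1) * P = M * (2 * k + 2) + (k + 1)" by (simp add: algebra_simps)
    then show ?thesis using tail_block[of "k + 1" k t M h] by (simp add: tail_base_zero)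
  qed
qed

text \<open>Expanding along column \<open>k\<close>, whose only entry is the \<open>1\<close> in the first row, peels off one
  row and column at a time.\<close>

lemma det_shifted_identity_plus:
  fixes L :: "nat \<Rightarrow> nat \<Rightarrow> 'a::comm_ring_1"
  assumes "\<And>i c. c \<ge> k \<Longrightarrow> L i c = 0"
  shows "det (mat (a + k + 1) (a + k + 1) (\<lambda>(i, c). (if c = min (k + i) (a + k) then 1 else 0) + L i c)) =
    (-1) ^ (k * a) * det (mat (k + 1) (k + 1) (\<lambda>(i, c). if c < k then L (a + i) c else 1))"
  using assms
proof (induction a arbitrary: L)
  case 0
  have "mat (0 + k + 1) (0 + k + 1) (\<lambda>(i, c). (if c = min (k + i) (0 + k) then 1 else 0) + L i c) =
        mat (k + 1) (k + 1) (\<lambda>(i, c). if c < k then L (0 + i) c else 1)"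
    by (rule eq_matI) (auto simp: 0)
  then show ?case by simp
next
  case (Suc a)
  let ?N = "Suc a + k + 1"
  let ?M = "mat ?N ?N (\<lambda>(i, c). (if c = min (k + i) (Suc a + k) then 1 else 0) + L i c :: 'a)"
  have "det ?M = (-1) ^ k * det (mat_delete ?M 0 k)"
    by (subst det_expand_col_single[of _ ?N 0 k]) (auto simp: Suc.prems)
  also have "mat_delete ?M 0 k = mat (a + k + 1) (a + k + 1)
      (\<lambda>(i, c). (if c = min (k + i) (a + k) then 1 else 0) + (if c < k then L (Suc i) c else 0))"
    by (rule eq_matI) (auto simp: mat_delete_def Suc.prems)
  also have "det \<dots> = (-1) ^ (k * a) *
      det (mat (k + 1) (k + 1) (\<lambda>(i, c). if c < k then (if c < k then L (Suc (a + i)) c else 0) else 1))"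
    using Suc.IH[of "\<lambda>i c. if c < k then L (Suc i) c else 0"] by simp
  also have "mat (k + 1) (k + 1) (\<lambda>(i, c). if c < k then (if c < k then L (Suc (a + i)) c else 0) else 1) =
      mat (k + 1) (k + 1) (\<lambda>(i, c). if c < k then L (Suc a + i) c else 1)"
    by (rule eq_matI) auto
  finally show ?case by (simp add: power_add mult.assoc)
qed

definition corner_mat :: "nat \<Rightarrow> 'a::comm_ring_1 \<Rightarrow> nat \<Rightarrow> 'a mat" where
  "corner_mat k t a = mat (k + 1) (k + 1) (\<lambda>(i, c). if c < k then tail k t (a + i) c else 1)"

lemma row_formula_mat_eq:
  assumes "n \<ge> k + 1"
  shows "row_formula_mat k t n = mat (n - k - 1 + k + 1) (n - k - 1 + k + 1)
     (\<lambda>(i, c). (if c = min (k + i) (n - k - 1 + k) then 1 else 0) + tail k t i c)"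
    (is "_ = ?M")
proof (rule eq_matI)
  fix i c
  assume "i < dim_row ?M" "c < dim_col ?M"
  then have i: "i < n" and c: "c < n" using assms by auto
  have nk: "n - k - 1 + k + 1 = n" "n - k - 1 + k = n - 1" using assms by auto
  show "row_formula_mat k t n $$ (i, c) = ?M $$ (i, c)"
  proof (cases "c < n - 1")
    case True
    then show ?thesis using i c unfolding nk by (auto simp: row_formula_mat_def row_formula_def)
  next
    case False
    then have cn: "c = n - 1" using c by simp
    have "(\<Sum>h = n - 1..k + n. row_formula k t i h) = (\<Sum>h = n - 1..k + n. if h = k + i then 1 else 0)"
      by (rule sum.cong) (use assms in \<open>auto simp: row_formula_def tail_ge\<close>)
    also have "\<dots> = (if k + i \<in> {n - 1..k + n} then 1 else 0)" by (rule sum.delta) simp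
    finally show ?thesis using i c cn assms unfolding nk by (auto simp: row_formula_mat_def tail_ge)
  qed
qed (use assms in \<open>auto simp: row_formula_mat_def\<close>)

lemma det_row_formula_mat_corner:
  assumes "n \<ge> k + 1"
  shows "det (row_formula_mat k t n) = (-1) ^ (k * (n - k - 1)) * det (corner_mat k t (n - k - 1))"
  unfolding row_formula_mat_eq[OF assms] corner_mat_def
  by (rule det_shifted_identity_plus) (simp add: tail_ge)

definition block_mat :: "nat \<Rightarrow> 'a::comm_ring_1 \<Rightarrow> nat \<Rightarrow> 'a mat" where
  "block_mat k t P = mat k k (\<lambda>(i, c). tail k t ((k + 1) * P + Suc i) c)"

lemma det_corner_mat_first_row:
  assumes "\<And>c. tail k t a c = 0"
  shows "det (corner_mat k t a) = (-1) ^ k * det (mat k k (\<lambda>(i, c). tail k t (a + Suc i) c))"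
proof -
  let ?B = "corner_mat k t a"
  have "det ?B = (-1) ^ k * det (mat_delete ?B 0 k)"
    by (subst det_expand_row_single[of _ "k + 1" 0 k]) (auto simp: corner_mat_def assms)
  also have "mat_delete ?B 0 k = mat k k (\<lambda>(i, c). tail k t (a + Suc i) c)"
    by (rule eq_matI) (auto simp: mat_delete_def corner_mat_def)
  finally show ?thesis .
qed

lemma det_corner_mat_last_row:
  assumes "\<And>c. tail k t (a + k) c = 0"
  shows "det (corner_mat k t a) = det (mat k k (\<lambda>(i, c). tail k t (a + i) c))"
proof -
  let ?B = "corner_mat k t a"
  have "det ?B = det (mat_delete ?B k k)"
    by (subst det_expand_row_single[of _ "k + 1" k k]) (auto simp: corner_mat_def assms)
  also have "mat_delete ?B k k = mat k k (\<lambda>(i, c). tail k t (a + i) c)"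
    by (rule eq_matI) (auto simp: mat_delete_def corner_mat_def)
  finally show ?thesis .
qed

lemma det_antidiagonal:
  fixes f :: "nat \<Rightarrow> 'a::comm_ring_1"
  shows "det (mat m m (\<lambda>(i, j). if i + j = m - 1 then f i else 0)) = (-1) ^ (m choose 2) * (\<Prod>i<m. f i)"
proof (induction m arbitrary: f)
  case 0
  then show ?case by (simp add: det_def numeral_2_eq_2)
next
  case (Suc m)
  let ?A = "mat (Suc m) (Suc m) (\<lambda>(i, j). if i + j = Suc m - 1 then f i else 0)"
  have "det ?A = (-1) ^ m * f 0 * det (mat_delete ?A 0 m)"
    by (subst det_expand_row_single[of _ "Suc m" 0 m]) auto
  also have "mat_delete ?A 0 m = mat m m (\<lambda>(i, j). if i + j = m - 1 then f (Suc i) else 0)"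
    by (rule eq_matI) (auto simp: mat_delete_def)
  also have "det \<dots> = (-1) ^ (m choose 2) * (\<Prod>i<m. f (Suc i))" by (rule Suc.IH)
  finally have "det ?A = (-1) ^ (m + (m choose 2)) * (f 0 * (\<Prod>i<m. f (Suc i)))"
    by (simp add: power_add algebra_simps)
  moreover have "m + (m choose 2) = Suc m choose 2" by (simp add: Suc_choose_2)
  moreover have "f 0 * (\<Prod>i<m. f (Suc i)) = (\<Prod>i<Suc m. f i)" by (simp only: prod.lessThan_Suc_shift)
  ultimately show ?case by simp
qed

lemma det_block_mat_even:
  "det (block_mat k t (2 * M)) = (-1) ^ (k choose 2) * t ^ (k * (M * (k + 1)) + (Suc k choose 2))"
proof -
  have block: "block_mat k t (2 * M) =
      mat k k (\<lambda>(i, c). if i + c = k - 1 then t ^ (M * (k + 1) + Suc i) else 0)"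
    (is "_ = ?A")
  proof (rule eq_matI)
    fix i c
    assume "i < dim_row ?A" "c < dim_col ?A"
    then have ic: "i < k" "c < k" by auto
    have e: "(k + 1) * (2 * M) + Suc i = M * (2 * k + 2) + Suc i" by (simp add: algebra_simps)
    have "tail k t ((k + 1) * (2 * M) + Suc i) c = t ^ (M * (k + 1)) * tail_base k t (Suc i) c"
      unfolding e by (rule tail_block) (use ic in simp)
    then show "block_mat k t (2 * M) $$ (i, c) = ?A $$ (i, c)"
      using ic by (auto simp: block_mat_def tail_base_def power_add)
  qed (auto simp: block_mat_def)
  have "det (block_mat k t (2 * M)) = (-1) ^ (k choose 2) * (\<Prod>i<k. t ^ (M * (k + 1) + Suc i))"
    unfolding block by (rule det_antidiagonal)
  also have "(\<Prod>i<k. t ^ (M * (k + 1) + Suc i)) = t ^ (\<Sum>i<k. M * (k + 1) + Suc i)"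
    by (simp add: power_sum)
  also have "(\<Sum>i<k. M * (k + 1) + Suc i) = k * (M * (k + 1)) + (Suc k choose 2)"
    unfolding sum.distrib sum_Suc_eq_Suc_choose_2 by simp
  finally show ?thesis .
qed

lemma det_block_mat_odd:
  "det (block_mat k t (2 * M + 1)) = (-1) ^ k * t ^ (k * ((M + 1) * (k + 1)))"
proof -
  have block: "block_mat k t (2 * M + 1) =
      mat k k (\<lambda>(i, c). if i = c then - (t ^ ((M + 1) * (k + 1))) else 0)"
    (is "_ = ?A")
  proof (rule eq_matI)
    fix i c
    assume "i < dim_row ?A" "c < dim_col ?A"
    then have ic: "i < k" "c < k" by auto
    have e: "(k + 1) * (2 * M + 1) + Suc i = M * (2 * k + 2) + (k + 2 + i)" by (simp add: algebra_simps)
    have "tail k t ((k + 1) * (2 * M + 1) + Suc i) c = t ^ (M * (k + 1)) * tail_base k t (k + 2 + i) c"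
      unfolding e by (rule tail_block) (use ic in simp)
    also have "tail_base k t (k + 2 + i) c = (if i = c then - (t ^ (k + 1)) else 0)"
      by (auto simp: tail_base_def)
    also have "t ^ (M * (k + 1)) * (if i = c then - (t ^ (k + 1)) else 0) =
        (if i = c then - (t ^ ((M + 1) * (k + 1))) else 0)"
      by (simp add: power_add add.commute)
    finally show "block_mat k t (2 * M + 1) $$ (i, c) = ?A $$ (i, c)"
      using ic by (simp add: block_mat_def)
  qed (auto simp: block_mat_def)
  have "det (block_mat k t (2 * M + 1)) = prod_list (diag_mat ?A)"
    unfolding block by (rule det_upper_triangular[of _ k]) auto
  also have "\<dots> = (- (t ^ ((M + 1) * (k + 1)))) ^ k"
    by (simp add: prod_list_diag_prod)
  also have "\<dots> = (-1) ^ k * (t ^ ((M + 1) * (k + 1))) ^ k" by (rule power_minus)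
  finally show ?thesis by (simp only: power_mult[symmetric] mult.commute)
qed

lemma det_block_mat:
  "det (block_mat k t P) = (-1) ^ ((k choose 2) + P * (Suc k choose 2)) * t ^ (Suc P * (Suc k choose 2))"
proof -
  let ?C = "Suc k choose 2"
  have C: "k * (k + 1) = 2 * ?C" "?C = k + (k choose 2)"
    using two_mult_Suc_choose_2[of k] by (auto simp: Suc_choose_2)
  obtain M where "P = 2 * M \<or> P = 2 * M + 1" by (metis oddE evenE)
  then show ?thesis
  proof
    assume P: "P = 2 * M"
    have exp: "k * (M * (k + 1)) + ?C = Suc P * ?C"
      unfolding P mult.left_commute[of k] C(1) by (simp add: algebra_simps)
    have sign: "(-1 :: 'a) ^ (k choose 2) = (-1) ^ ((k choose 2) + P * ?C)"
      unfolding P by (simp add: power_add power_mult)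
    show ?thesis unfolding P det_block_mat_even exp[unfolded P] sign[unfolded P] ..
  next
    assume P: "P = 2 * M + 1"
    have exp: "k * ((M + 1) * (k + 1)) = Suc P * ?C"
      unfolding P mult.left_commute[of k] C(1) by (simp add: algebra_simps)
    have "(k choose 2) + P * ?C = k + 2 * ((k choose 2) + M * ?C)"
      unfolding P C(2) by (simp add: algebra_simps)
    then have sign: "(-1 :: 'a) ^ k = (-1) ^ ((k choose 2) + P * ?C)"
      by (simp add: power_add power_mult)
    show ?thesis unfolding P det_block_mat_odd exp[unfolded P] sign[unfolded P] ..
  qed
qed

lemma det_row_formula_mat:
  assumes n: "n = (k + 1) * Suc m + r" and r: "r \<le> 1"
  shows "det (row_formula_mat k t n) = (-1) ^ k * det (block_mat k t m)"
proof -
  have nk: "n \<ge> k + 1" using n by simp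
  have "even (k * (k + 1) * m)" by simp
  then have even: "(-1 :: 'a) ^ (k * ((k + 1) * m)) = 1"
    by (metis mult.assoc neg_one_even_power)
  show ?thesis
  proof (cases r)
    case 0
    then have a: "n - k - 1 = (k + 1) * m" using n by simp
    have "det (corner_mat k t ((k + 1) * m)) = (-1) ^ k * det (block_mat k t m)"
      unfolding block_mat_def by (rule det_corner_mat_first_row[OF tail_mult_eq_0])
    then show ?thesis unfolding det_row_formula_mat_corner[OF nk] a even by simp
  next
    case (Suc r')
    then have a: "n - k - 1 = (k + 1) * m + 1" using n r by simp
    have last: "tail k t ((k + 1) * m + 1 + k) c = 0" for c
      using tail_mult_eq_0[of k t "Suc m" c] by (simp add: algebra_simps)
    have block: "mat k k (\<lambda>(i, c). tail k t ((k + 1) * m + 1 + i) c) = block_mat k t m"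
      by (rule eq_matI) (auto simp: block_mat_def)
    have e: "k * ((k + 1) * m + 1) = k * ((k + 1) * m) + k" by (simp add: algebra_simps)
    show ?thesis
      unfolding det_row_formula_mat_corner[OF nk] a det_corner_mat_last_row[OF last] block e
        power_add even by simp
  qed
qed

lemma tail_col_pred_eq_0:
  assumes "2 \<le> j" "j \<le> 2 * k"
  shows "tail k t (P * (2 * k + 2) + j) (k - 1) = 0"
  by (subst tail_block) (use assms in \<open>auto simp: tail_base_def\<close>)

lemma tail_col_0_eq_0:
  assumes "k + 3 \<le> j" "j \<le> 3 * k + 1"
  shows "tail k t (P * (2 * k + 2) + j) 0 = 0"
proof (cases "j < 2 * k + 2")
  case True
  then show ?thesis by (subst tail_block) (use assms in \<open>auto simp: tail_base_def\<close>)
next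
  case False
  then have "P * (2 * k + 2) + j = Suc P * (2 * k + 2) + (j - (2 * k + 2))" by simp
  then show ?thesis by (simp only:) (subst tail_block, use assms in \<open>auto simp: tail_base_def\<close>)
qed

text \<open>A residue \<open>s \<in> {2..k}\<close> leaves a whole column of the corner block empty: the \<open>k + 1\<close> consecutive
  rows miss both rows whose tail sits at height \<open>k - 1\<close> (for \<open>Q\<close> even), respectively at height
  \<open>0\<close> (for \<open>Q\<close> odd).\<close>

lemma det_corner_mat_eq_0:
  assumes s: "2 \<le> s" "s \<le> k"
  shows "det (corner_mat k t ((k + 1) * Q + s)) = 0"
proof -
  obtain c0 where c0: "c0 < k" and zero: "\<And>i. i \<le> k \<Longrightarrow> tail k t ((k + 1) * Q + s + i) c0 = 0"
  proof -
    obtain P where "Q = 2 * P \<or> Q = 2 * P + 1" by (metis oddE evenE)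
    then show ?thesis
    proof
      assume Q: "Q = 2 * P"
      show ?thesis
      proof (rule that[of "k - 1"])
        fix i
        assume "i \<le> k"
        have "(k + 1) * Q + s + i = P * (2 * k + 2) + (s + i)" unfolding Q by (simp add: algebra_simps)
        then show "tail k t ((k + 1) * Q + s + i) (k - 1) = 0"
          using s \<open>i \<le> k\<close> by (simp only: tail_col_pred_eq_0)
      qed (use s in simp)
    next
      assume Q: "Q = 2 * P + 1"
      show ?thesis
      proof (rule that[of 0])
        fix i
        assume "i \<le> k"
        have "(k + 1) * Q + s + i = P * (2 * k + 2) + (k + 1 + s + i)"
          unfolding Q by (simp add: algebra_simps)
        then show "tail k t ((k + 1) * Q + s + i) 0 = 0"
          using s \<open>i \<le> k\<close> by (simp only: tail_col_0_eq_0)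
      qed (use s in simp)
    qed
  qed
  show ?thesis
  proof (rule det_zero_col[of _ "k + 1" c0])
    fix i
    assume "i < k + 1"
    then show "corner_mat k t ((k + 1) * Q + s) $$ (i, c0) = 0"
      using zero[of i] c0 by (simp add: corner_mat_def)
  qed (use c0 in \<open>simp_all add: corner_mat_def\<close>)
qed

lemma det_row_formula_mat_small_eq_0:
  assumes "2 \<le> n" "n \<le> k"
  shows "det (row_formula_mat k t n) = 0"
proof -
  let ?X = "row_formula_mat k t n"
  have tail_0: "tail k t 0 h = 0" for h by (simp add: tail_def tail_base_def)
  have tail_1: "tail k t 1 h = (if h = k - 1 then t else 0)" for h
    using assms by (simp add: tail_small tail_base_def)
  have last_col: "(\<Sum>h = n - 1..k + n. row_formula k t 0 h) = 1"
    using assms by (simp add: row_formula_def tail_0)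
  have "det ?X = (-1) ^ (n - 1) * det (mat_delete ?X 0 (n - 1))"
    by (subst det_expand_row_single[of _ n 0 "n - 1"])
      (use assms in \<open>auto simp: row_formula_mat_def row_formula_def tail_0 last_col\<close>)
  also have "det (mat_delete ?X 0 (n - 1)) = 0"
  proof (rule det_zero_row[of _ "n - 1" 0])
    show "mat_delete ?X 0 (n - 1) \<in> carrier_mat (n - 1) (n - 1)"
      by (simp add: mat_delete_def row_formula_mat_def)
    show "0 < n - 1" using assms by simp
    fix j
    assume "j < n - 1"
    then show "mat_delete ?X 0 (n - 1) $$ (0, j) = 0"
      using assms tail_1[of j] by (auto simp: mat_delete_def row_formula_mat_def row_formula_def)
  qed
  finally show ?thesis by simp
qed

lemma det_row_formula_mat_eq_0:
  assumes "2 \<le> n mod (k + 1)"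
  shows "det (row_formula_mat k t n) = 0"
proof (cases "n \<ge> k + 1")
  case True
  define s where "s = n mod (k + 1)"
  have "s \<le> k" unfolding s_def using mod_less_divisor[of "k + 1" n] by linarith
  have "n div (k + 1) \<noteq> 0" using True by (simp add: div_greater_zero_iff)
  then obtain Q where Q: "n div (k + 1) = Suc Q" using not0_implies_Suc by blast
  have "(k + 1) * (n div (k + 1)) + s = n" unfolding s_def by (rule mult_div_mod_eq)
  then have "n - k - 1 = (k + 1) * Q + s" unfolding Q by simp
  then show ?thesis
    unfolding det_row_formula_mat_corner[OF True]
    using det_corner_mat_eq_0[of s k t Q] assms \<open>s \<le> k\<close> s_def by simp
next
  case False
  then show ?thesis using assms by (intro det_row_formula_mat_small_eq_0) auto
qed


lemma det_hankel_mat: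
  assumes n: "n = (k + 1) * n1 + r" and r: "r \<le> 1" and "n \<ge> 1"
  shows "det (mat n n (\<lambda>(i, j). Ppos_total x y (i + j) k)) =
    (-1) ^ (n1 * (Suc k choose 2)) * (x * y) ^ (n1 * (Suc k choose 2) + (n choose 2))"
proof (cases n1)
  case 0
  then have "n = 1" using n r \<open>n \<ge> 1\<close> by simp
  then show ?thesis by (subst det_single) (auto simp: Ppos_total_eq_path_op one_seq_def 0 numeral_2_eq_2)
next
  case (Suc m)
  let ?C = "Suc k choose 2"
  have "det (mat n n (\<lambda>(i, j). Ppos_total x y (i + j) k)) =
      det (row_formula_mat k (x * y) n) * (x * y) ^ (n choose 2)"
    by (rule det_hankel_eq_det_row_formula_mat) fact
  also have "det (row_formula_mat k (x * y) n) = (-1) ^ k * det (block_mat k (x * y) m)"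
    by (rule det_row_formula_mat[OF _ r]) (simp add: n Suc)
  also have "det (block_mat k (x * y) m) =
      (-1) ^ ((k choose 2) + m * ?C) * (x * y) ^ (Suc m * ?C)"
    by (rule det_block_mat)
  also have "(-1) ^ k * ((-1) ^ ((k choose 2) + m * ?C) * (x * y) ^ (Suc m * ?C)) * (x * y) ^ (n choose 2)
      = ((-1) ^ k * (-1) ^ ((k choose 2) + m * ?C)) * (x * y) ^ (Suc m * ?C + (n choose 2))"
    by (simp add: power_add mult_ac)
  also have "(-1 :: 'a) ^ k * (-1) ^ ((k choose 2) + m * ?C) = (-1) ^ (Suc m * ?C)"
    unfolding power_add[symmetric] by (simp add: Suc_choose_2 algebra_simps)
  finally show ?thesis unfolding Suc .
qed

lemma det_hankel_mat_eq_0: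
  assumes "2 \<le> n mod (k + 1)"
  shows "det (mat n n (\<lambda>(i, j). Ppos_total x y (i + j) k)) = 0"
proof -
  have "n \<ge> 1" using assms mod_less_eq_dividend[of n "k + 1"] by linarith
  then show ?thesis
    by (simp add: det_hankel_eq_det_row_formula_mat det_row_formula_mat_eq_0[OF assms])
qed

lemma hankel_exponent:
  "(k + 1) ^ 2 * (Suc m choose 2) = m * (Suc k choose 2) + (Suc ((k + 1) * m) choose 2)"
proof -
  have "2 * ((k + 1) ^ 2 * (Suc m choose 2)) = (k + 1) ^ 2 * (Suc m * m)"
    unfolding mult.left_commute[of 2] two_mult_Suc_choose_2 ..
  also have "\<dots> = m * (Suc k * k) + Suc ((k + 1) * m) * ((k + 1) * m)"
    by (simp add: algebra_simps power2_eq_square)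
  also have "\<dots> = 2 * (m * (Suc k choose 2) + (Suc ((k + 1) * m) choose 2))"
    unfolding distrib_left mult.left_commute[of 2 m] two_mult_Suc_choose_2 ..
  finally show ?thesis by simp
qed

lemma det_hankel_mat_dvd:
  assumes "(k + 1) dvd n" "n \<ge> 1"
  shows "det (mat n n (\<lambda>(i, j). Ppos_total x y (i + j) k)) =
    (let n1 = n div (k + 1) in
       (-1) ^ (n1 * ((k + 1) choose 2)) * (x * y) ^ ((k + 1)^2 * ((n1 + 1) choose 2) - n))"
proof -
  define n1 where "n1 = n div (k + 1)"
  have n: "n = (k + 1) * n1 + 0" unfolding n1_def by (metis assms(1) add_0_right dvd_mult_div_cancel)
  have "(k + 1)^2 * ((n1 + 1) choose 2) - n = n1 * ((k + 1) choose 2) + (n choose 2)"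
    using hankel_exponent[of k n1] Suc_choose_2[of n] n by simp
  then show ?thesis using det_hankel_mat[OF n _ assms(2)] unfolding Let_def n1_def[symmetric] by simp
qed

lemma det_hankel_mat_dvd_pred:
  assumes "(k + 1) dvd (n - 1)" "n \<ge> 1"
  shows "det (mat n n (\<lambda>(i, j). Ppos_total x y (i + j) k)) =
    (let n1 = (n - 1) div (k + 1) in
       (-1) ^ (n1 * ((k + 1) choose 2)) * (x * y) ^ ((k + 1)^2 * ((n1 + 1) choose 2)))"
proof -
  define n1 where "n1 = (n - 1) div (k + 1)"
  have n: "n = (k + 1) * n1 + 1"
    unfolding n1_def by (metis assms dvd_mult_div_cancel le_add_diff_inverse2)
  have "(k + 1)^2 * ((n1 + 1) choose 2) = n1 * ((k + 1) choose 2) + (n choose 2)"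
    using hankel_exponent[of k n1] n by simp
  then show ?thesis using det_hankel_mat[OF n _ assms(2)] unfolding Let_def n1_def[symmetric] by simp
qed

lemma two_le_mod_if_not_dvd:
  fixes m n :: nat
  assumes "\<not> m dvd n" "\<not> m dvd (n - 1)"
  shows "2 \<le> n mod m"
proof -
  have "n mod m \<noteq> 0" using assms(1) by (simp add: dvd_eq_mod_eq_0)
  moreover have "n mod m \<noteq> 1"
  proof
    assume "n mod m = 1"
    then have "n - 1 = m * (n div m)" by (metis add_diff_cancel_right' mult_div_mod_eq)
    then show False using assms(2) by (metis dvd_triv_left)
  qed
  ultimately show ?thesis by linarith
qed

theorem theorem3:
  fixes x y :: "'a::comm_ring_1" and n k :: nat
  assumes "n \<ge> 1"
  shows "det (mat n n (\<lambda>(i, j). Ppos_total x y (i + j) k)) =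
    (if (k + 1) dvd n then
       (let n1 = n div (k + 1) in
          (-1) ^ (n1 * ((k + 1) choose 2)) * (x * y) ^ ((k + 1)^2 * ((n1 + 1) choose 2) - n))
     else if (k + 1) dvd (n - 1) then
       (let n1 = (n - 1) div (k + 1) in
          (-1) ^ (n1 * ((k + 1) choose 2)) * (x * y) ^ ((k + 1)^2 * ((n1 + 1) choose 2)))
     else 0)"
proof (cases "(k + 1) dvd n")
  case True
  then show ?thesis using det_hankel_mat_dvd[OF True assms] by simp
next
  case not_dvd: False
  show ?thesis
  proof (cases "(k + 1) dvd (n - 1)")
    case True
    then show ?thesis using not_dvd det_hankel_mat_dvd_pred[OF True assms] by simp
  next
    case False
    then show ?thesis
      using not_dvd det_hankel_mat_eq_0[OF two_le_mod_if_not_dvd[OF not_dvd False]] by simp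
  qed
qed

end
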